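(* There exists $k_0$ such that for all integers $k\ge k_0$, all positive integers $N\ge k4^k$, all $\delta\in(0,2^{-k}/20]$ and all $x\in\left[4^{k^2},N^k/(k-1)!\right]$, \[ \#\mathcal{S}_1(N,\delta,x)\ge\frac{x^{1/k}}{200}. \]
   Context: For $y\in\mathbb{R}$, $\|y\|$ denotes the distance from $y$ to the nearest integer. For a positive integer $N$ and real $\delta,x\ge0$, $\mathcal{S}_1(N,\delta,x):=\{n\in\{1,\dots,N\} : \|x/n\|\ge\delta\}$. *)

theory Defs
  imports "HOL-Analysis.Analysis"
begin

definition dist_nearest_int :: "real \<Rightarrow> real" where
  "dist_nearest_int y = \<bar>y - of_int (round y)\<bar>"

definition S1 :: "nat \<Rightarrow> real \<Rightarrow> real \<Rightarrow> nat set" where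
  "S1 N \<delta> x = {n \<in> {1..N}. dist_nearest_int (x / real n) \<ge> \<delta>}"

end

theory Submission
  imports Defs
begin

text \<open>Put y = ((k-1)! x)^(1/k). For y/2 \<le> n \<le> y - k, the (k-1)-st finite difference of
  j \<mapsto> x/j at n is g(n) = (k-1)! x / (n (n+1) ... (n+k-1)), a number in [1, 2^k]. If none of
  n, ..., n+k-1 belonged to S1, this difference would lie within 2^(k-1) \<delta> \<le> 1/40 of an integer;
  so every n with ||g(n)|| \<ge> 1/20 has an element of S1 in its window of length k, and these n
  number at most k #S1. The other n have g(n) within 1/20 of some m \<in> {1..2^k}; since g decreases
  at relative rate at least k/y, each m accounts for at most y/(5km) + 1 of them, and summing the
  harmonic series bounds their number by about y/5 + 2^k. Hence k #S1 \<ge> y/4, and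
  ((k-1)!)^(1/k) \<ge> k/6 turns this into the claim.\<close>

lemma dist_nearest_int_le:
  assumes "z \<in> \<int>"
  shows "dist_nearest_int t \<le> \<bar>t - z\<bar>"
proof -
  obtain m where "z = of_int m" using assms Ints_cases by blast
  then show ?thesis unfolding dist_nearest_int_def using round_diff_minimal by simp
qed

fun fin_diff :: "nat \<Rightarrow> (nat \<Rightarrow> real) \<Rightarrow> nat \<Rightarrow> real" where
  "fin_diff 0 f n = f n"
| "fin_diff (Suc m) f n = fin_diff m f n - fin_diff m f (Suc n)"

lemma fin_diff_add: "fin_diff m (\<lambda>j. f j + h j) n = fin_diff m f n + fin_diff m h n"
  by (induction m arbitrary: n) auto

lemma fin_diff_Ints: "(\<And>j. f j \<in> \<int>) \<Longrightarrow> fin_diff m f n \<in> \<int>"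
  by (induction m arbitrary: n) auto

lemma abs_fin_diff_le:
  assumes "\<And>j. n \<le> j \<Longrightarrow> j \<le> n + m \<Longrightarrow> \<bar>f j\<bar> \<le> B"
  shows "\<bar>fin_diff m f n\<bar> \<le> 2 ^ m * B"
  using assms
proof (induction m arbitrary: n)
  case (Suc m)
  have "\<bar>fin_diff m f n\<bar> \<le> 2 ^ m * B" "\<bar>fin_diff m f (Suc n)\<bar> \<le> 2 ^ m * B"
    using Suc.IH[of n] Suc.IH[of "Suc n"] Suc.prems by auto
  then show ?case by simp
qed simp

lemma dist_nearest_int_fin_diff_le:
  assumes "\<And>j. n \<le> j \<Longrightarrow> j \<le> n + m \<Longrightarrow> dist_nearest_int (f j) \<le> \<epsilon>"
  shows "dist_nearest_int (fin_diff m f n) \<le> 2 ^ m * \<epsilon>"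
proof -
  define r where "r j = real_of_int (round (f j))" for j
  have split: "fin_diff m f n = fin_diff m r n + fin_diff m (\<lambda>j. f j - r j) n"
    using fin_diff_add[of m r "\<lambda>j. f j - r j" n] by simp
  have "fin_diff m r n \<in> \<int>"
    by (rule fin_diff_Ints) (simp add: r_def)
  then have "dist_nearest_int (fin_diff m f n) \<le> \<bar>fin_diff m f n - fin_diff m r n\<bar>"
    by (rule dist_nearest_int_le)
  also have "\<dots> = \<bar>fin_diff m (\<lambda>j. f j - r j) n\<bar>"
    using split by simp
  also have "\<dots> \<le> 2 ^ m * \<epsilon>"
    using assms by (intro abs_fin_diff_le) (simp add: r_def dist_nearest_int_def)
  finally show ?thesis .
qed

lemma fin_diff_reciprocal:
  assumes "1 \<le> n"
  shows "fin_diff m (\<lambda>j. x / real j) n = fact m * x / pochhammer (real n) (Suc m)"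
  using assms
proof (induction m arbitrary: n)
  case (Suc m)
  define A where "A = pochhammer (real n) (Suc m)"
  define B where "B = pochhammer (real (Suc n)) (Suc m)"
  have "real n > 0"
    using Suc.prems by simp
  have AB: "A * (real n + real (Suc m)) = real n * B"
    unfolding A_def B_def by (metis pochhammer_Suc pochhammer_rec of_nat_Suc add.commute)
  have "fin_diff (Suc m) (\<lambda>j. x / real j) n = fact m * x / A - fact m * x / B"
    using Suc by (simp add: A_def B_def)
  also have "\<dots> = fact m * x * (real n + real (Suc m)) / (real n * B) - fact m * x * real n / (real n * B)"
  proof -
    have "fact m * x / A = fact m * x * (real n + real (Suc m)) / (real n * B)"
      by (simp flip: AB)
    moreover have "fact m * x / B = fact m * x * real n / (real n * B)"
      using \<open>real n > 0\<close> by simp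
    ultimately show ?thesis by simp
  qed
  also have "\<dots> = fact (Suc m) * x / (real n * B)"
    unfolding diff_divide_distrib[symmetric] by (simp add: algebra_simps)
  also have "real n * B = pochhammer (real n) (Suc (Suc m))"
    unfolding B_def by (simp add: pochhammer_rec add.commute)
  finally show ?case .
qed simp

lemma card_le_of_gaps_less:
  fixes S :: "nat set"
  assumes "finite S" "0 \<le> L" and gaps: "\<And>u v. u \<in> S \<Longrightarrow> v \<in> S \<Longrightarrow> u < v \<Longrightarrow> real (v - u) < L"
  shows "real (card S) \<le> L + 1"
proof (cases "S = {}")
  case False
  define s where "s = Min S"
  have "s \<in> S" "\<And>v. v \<in> S \<Longrightarrow> s \<le> v"
    using False \<open>finite S\<close> by (simp_all add: s_def)
  then have "v - s \<le> nat \<lfloor>L\<rfloor>" if "v \<in> S" for v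
    using gaps[of s v] that by (cases "s < v") (auto simp: le_nat_floor)
  then have "S \<subseteq> {s..s + nat \<lfloor>L\<rfloor>}"
    using \<open>\<And>v. v \<in> S \<Longrightarrow> s \<le> v\<close> by fastforce
  then have "card S \<le> nat \<lfloor>L\<rfloor> + 1"
    using card_mono[of "{s..s + nat \<lfloor>L\<rfloor>}" S] by simp
  then show ?thesis using \<open>0 \<le> L\<close> by linarith
qed (use \<open>0 \<le> L\<close> in simp)

lemma card_le_mult_card_if_hits_windows:
  fixes S U :: "nat set"
  assumes "finite S" and hit: "\<And>n. n \<in> U \<Longrightarrow> \<exists>j\<in>S. n \<le> j \<and> j < n + k"
  shows "card U \<le> k * card S"
proof -
  have "U \<subseteq> (\<Union>j\<in>S. {Suc j - k..j})"
    using hit by fastforce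
  then have "card U \<le> card (\<Union>j\<in>S. {Suc j - k..j})"
    using \<open>finite S\<close> by (intro card_mono) auto
  also have "\<dots> \<le> (\<Sum>j\<in>S. card {Suc j - k..j})"
    by (rule card_UN_le[OF \<open>finite S\<close>])
  also have "\<dots> \<le> (\<Sum>j\<in>S. k)"
    by (intro sum_mono) auto
  finally show ?thesis by (simp add: mult.commute)
qed

lemma harm_le_one_plus_ln: "1 \<le> n \<Longrightarrow> harm n \<le> 1 + ln (real n)"
  using euler_mascheroni_sequence_decreasing[of 1 n] by (simp add: harm_def)

lemma card_near_value_le:
  fixes g :: "nat \<Rightarrow> real"
  assumes "finite R" "0 < c" "0 < \<epsilon>" "\<epsilon> \<le> 1/2" "1 \<le> m"
    and decay: "\<And>u v. u \<in> R \<Longrightarrow> v \<in> R \<Longrightarrow> u < v \<Longrightarrow> c * real (v - u) * g v \<le> g u - g v"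
  shows "real (card {n\<in>R. \<bar>g n - m\<bar> < \<epsilon>}) \<le> 4 * \<epsilon> / (c * m) + 1"
proof (rule card_le_of_gaps_less)
  show "finite {n\<in>R. \<bar>g n - m\<bar> < \<epsilon>}" "0 \<le> 4 * \<epsilon> / (c * m)"
    using assms by auto
next
  fix u v assume u: "u \<in> {n\<in>R. \<bar>g n - m\<bar> < \<epsilon>}" and v: "v \<in> {n\<in>R. \<bar>g n - m\<bar> < \<epsilon>}"
    and "u < v"
  have "m / 2 \<le> g v"
    using v assms by auto
  then have "c * real (v - u) * (m / 2) \<le> c * real (v - u) * g v"
    using \<open>0 < c\<close> by (intro mult_left_mono) auto
  also have "\<dots> \<le> g u - g v"
    using u v \<open>u < v\<close> by (intro decay) auto
  also have "\<dots> < 2 * \<epsilon>"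
    using u v by auto
  finally show "real (v - u) < 4 * \<epsilon> / (c * m)"
    using assms by (simp add: field_simps)
qed

lemma card_near_integer_values_le:
  fixes g :: "nat \<Rightarrow> real" and M :: nat
  assumes "finite R" "0 < c" "0 < \<epsilon>" "\<epsilon> \<le> 1/2" "1 \<le> M"
    and range: "\<And>n. n \<in> R \<Longrightarrow> 1 \<le> g n \<and> g n \<le> M"
    and decay: "\<And>u v. u \<in> R \<Longrightarrow> v \<in> R \<Longrightarrow> u < v \<Longrightarrow> c * real (v - u) * g v \<le> g u - g v"
  shows "real (card {n\<in>R. dist_nearest_int (g n) < \<epsilon>}) \<le> 4 * \<epsilon> * (1 + ln M) / c + M"
proof -
  let ?F = "\<lambda>m::nat. {n\<in>R. \<bar>g n - m\<bar> < \<epsilon>}"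
  have "{n\<in>R. dist_nearest_int (g n) < \<epsilon>} \<subseteq> (\<Union>m\<in>{1..M}. ?F m)"
  proof
    fix n assume n: "n \<in> {n\<in>R. dist_nearest_int (g n) < \<epsilon>}"
    have "round (1::real) \<le> round (g n)" "round (g n) \<le> round (real M)"
      using range[of n] n round_mono[of 1 "g n"] round_mono[of "g n" "real M"] by auto
    then have "nat (round (g n)) \<in> {1..M}" "real (nat (round (g n))) = round (g n)"
      by (auto simp: of_nat_nat)
    then show "n \<in> (\<Union>m\<in>{1..M}. ?F m)"
      using n by (intro UN_I[of "nat (round (g n))"]) (simp_all add: dist_nearest_int_def)
  qed
  then have "card {n\<in>R. dist_nearest_int (g n) < \<epsilon>} \<le> card (\<Union>m\<in>{1..M}. ?F m)"
    using \<open>finite R\<close> by (intro card_mono) auto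
  also have "\<dots> \<le> (\<Sum>m\<in>{1..M}. card (?F m))"
    by (rule card_UN_le) simp
  finally have "real (card {n\<in>R. dist_nearest_int (g n) < \<epsilon>}) \<le> real (\<Sum>m\<in>{1..M}. card (?F m))"
    by (rule of_nat_mono)
  also have "\<dots> = (\<Sum>m\<in>{1..M}. real (card (?F m)))"
    by (rule of_nat_sum)
  also have "\<dots> \<le> (\<Sum>m\<in>{1..M}. 4 * \<epsilon> / (c * real m) + 1)"
    using card_near_value_le[OF assms(1-4) _ decay] by (intro sum_mono) auto
  also have "\<dots> = 4 * \<epsilon> / c * harm M + M"
    by (simp add: sum.distrib sum_distrib_left harm_def divide_inverse mult_ac)
  also have "\<dots> \<le> 4 * \<epsilon> / c * (1 + ln M) + M"
    using harm_le_one_plus_ln[OF \<open>1 \<le> M\<close>] assms by (intro add_right_mono mult_left_mono) auto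
  finally show ?thesis by simp
qed

lemma pochhammer_bounds:
  fixes a :: real
  assumes "0 \<le> a"
  shows "a ^ k \<le> pochhammer a k" "pochhammer a k \<le> (a + real k) ^ k"
  using prod_mono[of "{0..<k}" "\<lambda>_. a" "\<lambda>i. a + real i"]
    prod_mono[of "{0..<k}" "\<lambda>i. a + real i" "\<lambda>_. a + real k"] assms
  by (auto simp: pochhammer_prod)

lemma pochhammer_ratio_ge:
  fixes a b :: real
  assumes "0 < a" "a \<le> b"
  shows "pochhammer a k * (1 + real k * (b - a) / (a + real k)) \<le> pochhammer b k"
proof -
  define q where "q = 1 + (b - a) / (a + real k)"
  have "q \<ge> 0"
    using assms by (simp add: q_def)
  have "0 \<le> (b - a) / (a + real k)"
    using assms by simp
  then have "1 + real k * (b - a) / (a + real k) \<le> q ^ k"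
    using Bernoulli_inequality[of "(b - a) / (a + real k)" k] by (simp add: q_def)
  then have "pochhammer a k * (1 + real k * (b - a) / (a + real k)) \<le> pochhammer a k * q ^ k"
    using assms by (intro mult_left_mono pochhammer_nonneg) auto
  also have "\<dots> = (\<Prod>i\<in>{0..<k}. (a + real i) * q)"
    by (simp add: pochhammer_prod prod.distrib)
  also have "\<dots> \<le> (\<Prod>i\<in>{0..<k}. b + real i)"
  proof (rule prod_mono)
    fix i assume "i \<in> {0..<k}"
    then have "(a + real i) * q = a + real i + (b - a) * ((a + real i) / (a + real k))"
      using assms by (simp add: q_def field_simps)
    also have "\<dots> \<le> a + real i + (b - a) * 1"
      using \<open>i \<in> {0..<k}\<close> assms by (intro add_left_mono mult_left_mono) auto
    finally show "0 \<le> (a + real i) * q \<and> (a + real i) * q \<le> b + real i"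
      using assms \<open>q \<ge> 0\<close> by simp
  qed
  finally show ?thesis
    by (simp add: pochhammer_prod)
qed

lemma pochhammer_quotient_decay:
  fixes a b C :: real
  assumes "0 < a" "a \<le> b" "0 \<le> C"
  shows "real k * (b - a) / (a + real k) * (C / pochhammer b k) \<le> C / pochhammer a k - C / pochhammer b k"
proof -
  define t where "t = real k * (b - a) / (a + real k)"
  have pos: "0 < pochhammer a k" "0 < pochhammer b k"
    using assms by (auto intro: pochhammer_pos)
  have "C * (pochhammer a k * (1 + t)) \<le> C * pochhammer b k"
    using pochhammer_ratio_ge[OF assms(1,2)] \<open>0 \<le> C\<close> by (intro mult_left_mono) (auto simp: t_def)
  then have "(1 + t) * (C / pochhammer b k) \<le> C / pochhammer a k"
    using pos by (simp add: field_simps)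
  then show ?thesis
    by (simp add: t_def algebra_simps)
qed

lemma card_near_integer_pochhammer_quotients_le:
  fixes y C \<epsilon> :: real
  assumes "1 \<le> k" "0 < y" "y ^ k = C" "0 < \<epsilon>" "\<epsilon> \<le> 1/2"
  defines "R \<equiv> {n. y / 2 \<le> real n \<and> real n + real k \<le> y}"
  shows "real (card {n\<in>R. dist_nearest_int (C / pochhammer (real n) k) < \<epsilon>})
    \<le> 4 * \<epsilon> * (1 + real k * ln 2) * y / real k + 2 ^ k"
proof -
  define g where "g n = C / pochhammer (real n) k" for n
  have "0 \<le> C"
    using \<open>0 < y\<close> \<open>y ^ k = C\<close> by auto
  have R_pos: "0 < real n" if "n \<in> R" for n
    using that \<open>0 < y\<close> by (simp add: R_def)
  have "finite R"
    by (rule finite_subset[of _ "{..nat \<lfloor>y\<rfloor>}"]) (auto simp: R_def le_nat_floor)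
  moreover have "1 \<le> g n \<and> g n \<le> real (2 ^ k)" if "n \<in> R" for n
  proof -
    have "pochhammer (real n) k \<le> y ^ k"
      using pochhammer_bounds(2)[of "real n" k] power_mono[of "real n + real k" y k] that
      by (simp add: R_def)
    moreover have "(y / 2) ^ k \<le> pochhammer (real n) k"
      using pochhammer_bounds(1)[of "real n" k] power_mono[of "y / 2" "real n" k] that \<open>0 < y\<close>
      by (simp add: R_def)
    moreover have "0 < pochhammer (real n) k"
      using R_pos[OF that] by (rule pochhammer_pos)
    ultimately show ?thesis
      using \<open>y ^ k = C\<close> by (simp add: g_def field_simps power_divide)
  qed
  moreover have "real k / y * real (v - u) * g v \<le> g u - g v"
    if "u \<in> R" "v \<in> R" "u < v" for u v
  proof -
    have "real k / y * real (v - u) \<le> real k * (real v - real u) / (real u + real k)"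
      using that \<open>0 < y\<close> R_pos[of u] by (simp add: R_def of_nat_diff frac_le)
    then have "real k / y * real (v - u) * g v \<le> real k * (real v - real u) / (real u + real k) * g v"
      using pochhammer_nonneg[OF R_pos[OF \<open>v \<in> R\<close>], of k] \<open>0 \<le> C\<close>
      by (intro mult_right_mono) (auto simp: g_def)
    also have "\<dots> \<le> g u - g v"
      using pochhammer_quotient_decay[of "real u" "real v" C k] R_pos[OF \<open>u \<in> R\<close>] \<open>u < v\<close> \<open>0 \<le> C\<close>
      by (simp add: g_def)
    finally show ?thesis .
  qed
  ultimately have "real (card {n\<in>R. dist_nearest_int (g n) < \<epsilon>})
      \<le> 4 * \<epsilon> * (1 + ln (real (2 ^ k))) / (real k / y) + real (2 ^ k)"
    using assms by (intro card_near_integer_values_le) auto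
  then show ?thesis
    using \<open>0 < y\<close> by (simp add: g_def ln_realpow)
qed

lemma card_fin_diff_far_le_mult_card_S1:
  assumes "1 \<le> k"
    and window: "\<And>n. n \<in> U \<Longrightarrow> 1 \<le> n \<and> n + k \<le> N + 1"
    and far: "\<And>n. n \<in> U \<Longrightarrow> 2 ^ (k - 1) * \<delta> < dist_nearest_int (fin_diff (k - 1) (\<lambda>j. x / real j) n)"
  shows "card U \<le> k * card (S1 N \<delta> x)"
proof (rule card_le_mult_card_if_hits_windows)
  show "finite (S1 N \<delta> x)"
    by (simp add: S1_def)
next
  fix n assume "n \<in> U"
  show "\<exists>j\<in>S1 N \<delta> x. n \<le> j \<and> j < n + k"
  proof (rule ccontr)
    assume "\<not> ?thesis"
    then have "dist_nearest_int (x / real j) \<le> \<delta>" if "n \<le> j" "j \<le> n + (k - 1)" for j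
      using that window[OF \<open>n \<in> U\<close>] \<open>1 \<le> k\<close> by (auto simp: S1_def)
    then have "dist_nearest_int (fin_diff (k - 1) (\<lambda>j. x / real j) n) \<le> 2 ^ (k - 1) * \<delta>"
      by (rule dist_nearest_int_fin_diff_le)
    then show False
      using far[OF \<open>n \<in> U\<close>] by simp
  qed
qed

lemma card_nat_interval_ge:
  fixes a b :: real
  assumes "0 \<le> a"
  shows "b - a - 1 \<le> real (card {n::nat. a \<le> real n \<and> real n \<le> b})"
proof (cases "a \<le> b")
  case True
  then have "{n::nat. a \<le> real n \<and> real n \<le> b} = {nat \<lceil>a\<rceil>..nat \<lfloor>b\<rfloor>}"
    using assms by (auto simp: le_nat_iff le_floor_iff nat_ceiling_le_eq)
  then show ?thesis
    using True assms by (simp add: of_nat_diff) linarith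
qed simp

lemma power_le_exp_mult_fact:
  fixes x :: real
  assumes "0 \<le> x"
  shows "x ^ n \<le> exp x * fact n"
proof -
  have "(\<lambda>m. x ^ m / fact m) sums exp x"
    using exp_converges[of x] by (simp add: divide_inverse mult.commute)
  then have "x ^ n / fact n \<le> exp x"
    using sum_le_suminf[of "\<lambda>m. x ^ m / fact m" "{n}"] assms by (auto simp: sums_iff)
  then show ?thesis
    by (simp add: field_simps)
qed

lemma root_fact_ge:
  assumes "1 \<le> k"
  shows "real k / 6 \<le> root k (fact (k - 1))"
proof -
  have "exp (real k) \<le> 3 ^ k"
    using power_mono[OF exp_le, of k] by (simp add: exp_of_nat_mult[symmetric])
  moreover have "real k \<le> 2 ^ k"
    using of_nat_mono[OF less_imp_le[OF less_exp[of k]]] by simp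
  moreover have "fact k = real k * fact (k - 1)"
    using assms by (simp add: fact_reduce)
  ultimately have "exp (real k) * fact k \<le> 3 ^ k * (2 ^ k * fact (k - 1))"
    by (simp add: mult_mono)
  then have "real k ^ k \<le> 3 ^ k * 2 ^ k * fact (k - 1)"
    using power_le_exp_mult_fact[of "real k" k] by (simp add: mult.assoc)
  also have "(3::real) ^ k * 2 ^ k = 6 ^ k"
    by (simp flip: power_mult_distrib)
  finally have "(real k / 6) ^ k \<le> fact (k - 1)"
    by (simp add: power_divide field_simps)
  then show ?thesis
    using assms real_root_le_mono[of k "(real k / 6) ^ k" "fact (k - 1)"]
    by (simp add: real_root_power_cancel)
qed

lemma linear_le_two_power: "20 \<le> k \<Longrightarrow> 100 * (real k + 1) \<le> 2 ^ k"
  by (induction k rule: dec_induct) simp_all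

lemma S1_counting_bound:
  fixes k N :: nat and \<delta> x y :: real
  assumes "1 \<le> k" "\<delta> \<le> 1 / 2 ^ k / 20" "0 < y" "y ^ k = fact (k - 1) * x" "y \<le> real N"
  shows "y / 2 - real k - 1 \<le> real k * real (card (S1 N \<delta> x)) + (1 + real k * ln 2) / (5 * real k) * y + 2 ^ k"
proof -
  define R where "R = {n. y / 2 \<le> real n \<and> real n + real k \<le> y}"
  define g where "g n = fact (k - 1) * x / pochhammer (real n) k" for n
  define far where "far = {n\<in>R. 1 / 20 \<le> dist_nearest_int (g n)}"
  define near where "near = {n\<in>R. dist_nearest_int (g n) < 1 / 20}"
  have "2 ^ (k - 1) * \<delta> \<le> 2 ^ (k - 1) * (1 / 2 ^ k / 20)"
    using assms(2) by (intro mult_left_mono) auto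
  also have "\<dots> < 1 / 20"
    using \<open>1 \<le> k\<close> by (simp add: power_diff)
  finally have "card far \<le> k * card (S1 N \<delta> x)"
    using assms fin_diff_reciprocal[of _ "k - 1" x]
    by (intro card_fin_diff_far_le_mult_card_S1) (auto simp: far_def R_def g_def)
  then have "real (card far) \<le> real k * real (card (S1 N \<delta> x))"
    by (metis of_nat_mono of_nat_mult)
  moreover have "real (card near) \<le> 4 * (1 / 20) * (1 + real k * ln 2) * y / real k + 2 ^ k"
    unfolding near_def g_def R_def using assms
    by (intro card_near_integer_pochhammer_quotients_le) auto
  moreover have "R = {n. y / 2 \<le> real n \<and> real n \<le> y - real k}"
    by (auto simp: R_def)
  then have "y / 2 - real k - 1 \<le> real (card R)"
    using card_nat_interval_ge[of "y / 2" "y - real k"] \<open>0 < y\<close> by simp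
  moreover have "R = far \<union> near"
    by (auto simp: far_def near_def)
  then have "real (card R) \<le> real (card far) + real (card near)"
    by (metis card_Un_le of_nat_add of_nat_mono)
  ultimately show ?thesis
    by simp
qed

lemma card_S1_ge:
  fixes k N :: nat and \<delta> x y :: real
  assumes "20 \<le> k" "\<delta> \<le> 1 / 2 ^ k / 20" "y ^ k = fact (k - 1) * x" "4 ^ k \<le> y" "y \<le> real N"
  shows "y / (4 * real k) \<le> real (card (S1 N \<delta> x))"
proof -
  have "(0::real) < 4 ^ k"
    by simp
  then have "0 < y"
    using assms(4) by linarith
  have "(1 + real k * ln 2) / (5 * real k) \<le> (1 + real k) / (5 * real k)"
    using ln_2_less_1 by (intro divide_right_mono) (auto simp: mult_left_le)
  also have "\<dots> \<le> 21 / 100"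
    using \<open>20 \<le> k\<close> by (simp add: field_simps)
  finally have "(1 + real k * ln 2) / (5 * real k) * y \<le> 21 / 100 * y"
    using \<open>0 < y\<close> by (intro mult_right_mono) auto
  moreover have "100 * (real k + 1) * 2 ^ k \<le> 2 ^ k * 2 ^ k"
    using linear_le_two_power[OF \<open>20 \<le> k\<close>] by (intro mult_right_mono) auto
  then have "100 * (real k + 1) * 2 ^ k \<le> y"
    using assms(4) by (simp flip: power_mult_distrib)
  moreover have "real k + 1 \<le> (real k + 1) * 2 ^ k" "2 ^ k \<le> (real k + 1) * (2::real) ^ k"
    by simp_all
  ultimately have "y / 4 \<le> real k * real (card (S1 N \<delta> x))"
    using S1_counting_bound[of k \<delta> y x N] assms \<open>0 < y\<close> by linarith
  then show ?thesis
    using \<open>20 \<le> k\<close> by (simp add: field_simps)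
qed

theorem lemma3p9:
  shows "\<exists>k0::nat. \<forall>k::nat. \<forall>N::nat. \<forall>\<delta>::real. \<forall>x::real.
    k \<ge> k0 \<longrightarrow> N \<ge> 1 \<longrightarrow> real N \<ge> real k * 4 ^ k \<longrightarrow>
    0 < \<delta> \<longrightarrow> \<delta> \<le> (1 / 2 ^ k) / 20 \<longrightarrow>
    4 ^ (k ^ 2) \<le> x \<longrightarrow> x \<le> real N ^ k / fact (k - 1) \<longrightarrow>
    real (card (S1 N \<delta> x)) \<ge> root k x / 200"
proof (intro exI[of _ 20] allI impI)
  fix k N :: nat and \<delta> x :: real
  assume "20 \<le> k" "\<delta> \<le> 1 / 2 ^ k / 20" "4 ^ (k ^ 2) \<le> x" "x \<le> real N ^ k / fact (k - 1)"
  define y where "y = root k (fact (k - 1) * x)"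
  have "0 < k" "0 < x"
    using \<open>20 \<le> k\<close> \<open>4 ^ (k ^ 2) \<le> x\<close> zero_less_power[of "4::real" "k ^ 2"] by linarith+
  then have "0 \<le> y" and y_pow: "y ^ k = fact (k - 1) * x"
    by (simp_all add: y_def)
  moreover have "x \<le> fact (k - 1) * x"
    using \<open>0 < x\<close> by (simp add: mult_le_cancel_right1)
  ultimately have "(4 ^ k) ^ k \<le> y ^ k" "y ^ k \<le> real N ^ k"
    using \<open>4 ^ (k ^ 2) \<le> x\<close> \<open>x \<le> real N ^ k / fact (k - 1)\<close>
    by (simp_all add: power_mult[symmetric] power2_eq_square field_simps)
  then have "4 ^ k \<le> y" "y \<le> real N"
    using \<open>0 < k\<close> \<open>0 \<le> y\<close> by (simp_all add: power_mono_iff)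
  then have "y / (4 * real k) \<le> real (card (S1 N \<delta> x))"
    using \<open>20 \<le> k\<close> \<open>\<delta> \<le> 1 / 2 ^ k / 20\<close> y_pow by (intro card_S1_ge)
  moreover have "real k / 6 * root k x \<le> y"
    using root_fact_ge[of k] \<open>0 < k\<close> \<open>0 < x\<close> by (simp add: y_def real_root_mult mult_right_mono)
  then have "root k x / 24 \<le> y / (4 * real k)"
    using \<open>0 < k\<close> by (simp add: field_simps)
  ultimately show "root k x / 200 \<le> real (card (S1 N \<delta> x))"
    using \<open>0 < x\<close> by simp
qed

end
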